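(* The Diophantine equation $$x(x+1)\,y(y+1)=z(z+1)(z+2)(z+3)$$ has infinitely many solutions in positive integers $x,y,z$ satisfying $(z-x)(z-x+2)\neq 0$. *)

theory Defs
  imports Main
begin

end

theory Submission
  imports Defs
begin

text \<open>Every Pythagorean triple with consecutive legs, \<open>x\<^sup>2 + (x + 1)\<^sup>2 = q\<^sup>2\<close>, yields the
solution \<open>y = 3x + 2q + 1\<close>, \<open>z = x + q - 1\<close>, for which \<open>z - x = q - 1\<close> and \<open>z - x + 2 = q + 1\<close>
are nonzero for \<open>x > 0\<close>. The triples form an infinite family, since the
automorphism \<open>(x, q) \<mapsto> (3x + 2q + 1, 4x + 3q + 2)\<close> of the conic \<open>q\<^sup>2 = 2x\<^sup>2 + 2x + 1\<close>
strictly increases \<open>x\<close> on positive points, starting from \<open>(3, 5)\<close>.\<close>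

lemma consecutive_legs_step:
  fixes x q :: int
  assumes "q\<^sup>2 = 2 * x\<^sup>2 + 2 * x + 1"
  shows "(4 * x + 3 * q + 2)\<^sup>2 = 2 * (3 * x + 2 * q + 1)\<^sup>2 + 2 * (3 * x + 2 * q + 1) + 1"
proof -
  have "(4 * x + 3 * q + 2)\<^sup>2 - (2 * (3 * x + 2 * q + 1)\<^sup>2 + 2 * (3 * x + 2 * q + 1) + 1)
      = q\<^sup>2 - (2 * x\<^sup>2 + 2 * x + 1)"
    by (simp add: algebra_simps power2_eq_square)
  with assms show ?thesis by simp
qed

lemma infinite_consecutive_legs:
  "infinite {(x::int, q::int). x > 0 \<and> q > 0 \<and> q\<^sup>2 = 2 * x\<^sup>2 + 2 * x + 1}"
  (is "infinite ?S")
proof -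
  have "infinite (fst ` ?S)"
  proof (rule infinite_growing)
    have "(3, 5) \<in> ?S" by simp
    then show "fst ` ?S \<noteq> {}" by blast
  next
    fix x assume "x \<in> fst ` ?S"
    then obtain q where "x > 0" "q > 0" and pell: "q\<^sup>2 = 2 * x\<^sup>2 + 2 * x + 1"
      by auto
    then have "(3 * x + 2 * q + 1, 4 * x + 3 * q + 2) \<in> ?S"
      using consecutive_legs_step[OF pell] by simp
    then have "3 * x + 2 * q + 1 \<in> fst ` ?S"
      by (rule image_eqI[rotated]) simp
    with \<open>x > 0\<close> \<open>q > 0\<close> show "\<exists>x' \<in> fst ` ?S. x' > x"
      by (intro bexI) auto
  qed
  then show ?thesis by blast
qed

lemma consecutive_legs_solution:
  fixes x q :: int
  assumes "q\<^sup>2 = 2 * x\<^sup>2 + 2 * x + 1"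
  defines "y \<equiv> 3 * x + 2 * q + 1" and "z \<equiv> x + q - 1"
  shows "x * (x + 1) * (y * (y + 1)) = z * (z + 1) * (z + 2) * (z + 3)"
proof -
  have "x * (x + 1) * (y * (y + 1)) - z * (z + 1) * (z + 2) * (z + 3)
      = (q\<^sup>2 - (2 * x\<^sup>2 + 2 * x + 1)) * - (4 * x\<^sup>2 + 4 * x * q + q\<^sup>2 + 4 * x + 2 * q)"
    unfolding y_def z_def by (simp add: algebra_simps power2_eq_square)
  with assms show ?thesis by simp
qed

theorem theorem3:
  shows "infinite {(x::int, y::int, z::int).
            x > 0 \<and> y > 0 \<and> z > 0 \<and>
            x * (x + 1) * (y * (y + 1)) = z * (z + 1) * (z + 2) * (z + 3) \<and>
            (z - x) * (z - x + 2) \<noteq> 0}"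
  (is "infinite ?Sol")
proof -
  let ?S = "{(x::int, q::int). x > 0 \<and> q > 0 \<and> q\<^sup>2 = 2 * x\<^sup>2 + 2 * x + 1}"
  define sol where "sol = (\<lambda>(x::int, q::int). (x, 3 * x + 2 * q + 1, x + q - 1))"
  have "inj sol"
    by (rule injI) (auto simp: sol_def split: prod.splits)
  have "sol p \<in> ?Sol" if "p \<in> ?S" for p
  proof -
    from that obtain x q where p: "p = (x, q)" and "x > 0" "q > 0"
      and pell: "q\<^sup>2 = 2 * x\<^sup>2 + 2 * x + 1" by auto
    have "0 < x\<^sup>2" using \<open>x > 0\<close> by simp
    then have "q\<^sup>2 \<noteq> 1" using pell \<open>x > 0\<close> by linarith
    then have "q > 1" using \<open>q > 0\<close> by (cases "q = 1") auto
    then show ?thesis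
      using \<open>x > 0\<close> consecutive_legs_solution[OF pell] by (simp add: p sol_def)
  qed
  then have "sol ` ?S \<subseteq> ?Sol" by (rule image_subsetI)
  moreover have "infinite (sol ` ?S)"
    using infinite_consecutive_legs finite_imageD inj_on_subset[OF \<open>inj sol\<close>] by blast
  ultimately show ?thesis by (rule infinite_super)
qed

end
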